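(* Let $m\ge 2$, $2\le k\le m$, $N=\binom{m}{k}$ and $\pi\in\mathbb{R}^m_{>0}$. A discrete choice design $\xi^*$ is locally $D$-optimal (for $\pi$) if and only if (i) $\xi^*\in\Delta_N$, (ii) $R^{-1}SL\,\vec{\Gamma}(\xi^* )\le (m-1)\mathbf{1}$ entrywise, and (iii) $\langle R^{-1}SL\,\vec{\Gamma}(\xi^* )-(m-1)\mathbf{1},\,\xi^*\rangle=0$.
   Context: Discrete choice model: alternatives $[m]$ with parameters $\pi_i>0$; choice sets $C_1,\ldots,C_N$ are all $k$-subsets of $[m]$ in lexicographic order, and in choice set $C_j$ alternative $i$ is chosen with probability $\pi_i/\sum_{s\in C_j}\pi_s$. A design is $\xi=(w_1,\ldots,w_N)\in\Delta_N=\{\xi\in\mathbb{R}^N_{\ge0}:\sum_j w_j=1\}$. Its information matrix $M(\xi)$ is the $m\times m$ symmetric matrix with off-diagonal entries $M_{st}(\xi)=-\pi_s\pi_t\sum_{j:\,s,t\in C_j} w_j/(\sum_{i\in C_j}\pi_i)^2$ and diagonal chosen so all row sums vanish. $M^{(m)}(\xi)$ is $M(\xi)$ with the $m$-th row and column deleted. $\xi^*$ is locally $D$-optimal if it maximizes $\log\det M^{(m)}(\xi)$ over $\xi\in\Delta_N$. $\Sigma^{(m)}(\xi)=M^{(m)}(\xi)^{-1}$ and $\Gamma(\xi)$ is its Farris transform: $\Gamma_{uv}=\Sigma_{uu}+\Sigma_{vv}-2\Sigma_{uv}$ for $u,v<m$, $\Gamma_{um}=\Gamma_{mu}=\Sigma_{uu}$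 for $u<m$, $\Gamma_{mm}=0$; $\vec{\Gamma}=(\Gamma_{uv})_{u<v}$ in lexicographic order of pairs. $S$ is the $N\times\binom{m}{2}$ matrix with $S_{j,(u,v)}=1$ if $u,v\in C_j$ and $0$ otherwise; $R=\mathrm{diag}\big((\sum_{i\in C_j}\pi_i)^2\big)_{j=1}^N$; $L=\mathrm{diag}(\pi_u\pi_v)_{u<v}$ in lexicographic order. $\langle\cdot,\cdot\rangle$ is the standard inner product on $\mathbb{R}^N$. *)

theory Defs
  imports "HOL-Library.Extended_Real" "Jordan_Normal_Form.Gauss_Jordan_Elimination"
          "Jordan_Normal_Form.Determinant"
begin

text \<open>Alternatives are 0,...,m-1 (the paper's alternative m is index m-1).
  Choice sets are the k-subsets of the alternatives; a design assigns a weight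
  to each choice set (indexing by the sets themselves instead of their
  position in lexicographic order).\<close>

definition choice_sets :: "nat \<Rightarrow> nat \<Rightarrow> nat set set" where
  "choice_sets m k = {C. C \<subseteq> {..<m} \<and> card C = k}"

definition simplex :: "nat \<Rightarrow> nat \<Rightarrow> (nat set \<Rightarrow> real) set" where
  "simplex m k = {w. (\<forall>C\<in>choice_sets m k. 0 \<le> w C) \<and> (\<Sum>C\<in>choice_sets m k. w C) = 1}"

definition setsum_pi :: "(nat \<Rightarrow> real) \<Rightarrow> nat set \<Rightarrow> real" where
  "setsum_pi p C = (\<Sum>i\<in>C. p i)"

definition M_off :: "nat \<Rightarrow> nat \<Rightarrow> (nat \<Rightarrow> real) \<Rightarrow> (nat set \<Rightarrow> real) \<Rightarrow> nat \<Rightarrow> nat \<Rightarrow> real" where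
  "M_off m k p w s t = - p s * p t *
     (\<Sum>C\<in>{C\<in>choice_sets m k. s \<in> C \<and> t \<in> C}. w C / (setsum_pi p C)^2)"

text \<open>Entries of M(xi): diagonal chosen so that all row sums vanish.\<close>
definition M_entry :: "nat \<Rightarrow> nat \<Rightarrow> (nat \<Rightarrow> real) \<Rightarrow> (nat set \<Rightarrow> real) \<Rightarrow> nat \<Rightarrow> nat \<Rightarrow> real" where
  "M_entry m k p w s t =
     (if s = t then - (\<Sum>u\<in>{..<m} - {s}. M_off m k p w s u) else M_off m k p w s t)"

definition Mred :: "nat \<Rightarrow> nat \<Rightarrow> (nat \<Rightarrow> real) \<Rightarrow> (nat set \<Rightarrow> real) \<Rightarrow> real mat" where
  "Mred m k p w = mat (m - 1) (m - 1) (\<lambda>(s, t). M_entry m k p w s t)"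

definition logdet :: "nat \<Rightarrow> nat \<Rightarrow> (nat \<Rightarrow> real) \<Rightarrow> (nat set \<Rightarrow> real) \<Rightarrow> ereal" where
  "logdet m k p w = (if det (Mred m k p w) > 0 then ereal (ln (det (Mred m k p w))) else -\<infinity>)"

definition locally_D_optimal :: "nat \<Rightarrow> nat \<Rightarrow> (nat \<Rightarrow> real) \<Rightarrow> (nat set \<Rightarrow> real) \<Rightarrow> bool" where
  "locally_D_optimal m k p w \<longleftrightarrow>
     w \<in> simplex m k \<and> (\<forall>w' \<in> simplex m k. logdet m k p w' \<le> logdet m k p w)"

text \<open>Sigma^(m)(xi) = M^(m)(xi)^{-1} (meaningful when M^(m)(xi) is nonsingular).\<close>
definition Sigma :: "nat \<Rightarrow> nat \<Rightarrow> (nat \<Rightarrow> real) \<Rightarrow> (nat set \<Rightarrow> real) \<Rightarrow> real mat" where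
  "Sigma m k p w = (case mat_inverse (Mred m k p w) of Some A \<Rightarrow> A | None \<Rightarrow> 0\<^sub>m (m - 1) (m - 1))"

text \<open>Farris transform Gamma(xi), for indices u, v < m (last alternative is m-1).\<close>
definition Gamma :: "nat \<Rightarrow> nat \<Rightarrow> (nat \<Rightarrow> real) \<Rightarrow> (nat set \<Rightarrow> real) \<Rightarrow> nat \<Rightarrow> nat \<Rightarrow> real" where
  "Gamma m k p w u v =
    (let S = Sigma m k p w in
     if u = m - 1 \<and> v = m - 1 then 0
     else if v = m - 1 then S $$ (u, u)
     else if u = m - 1 then S $$ (v, v)
     else S $$ (u, u) + S $$ (v, v) - 2 * S $$ (u, v))"

text \<open>The C-th entry of the vector R^{-1} S L vec(Gamma(xi)).\<close>
definition RSLGamma :: "nat \<Rightarrow> nat \<Rightarrow> (nat \<Rightarrow> real) \<Rightarrow> (nat set \<Rightarrow> real) \<Rightarrow> nat set \<Rightarrow> real" where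
  "RSLGamma m k p w C =
     (\<Sum>(u, v)\<in>{(u, v). u < v \<and> v < m \<and> u \<in> C \<and> v \<in> C}. p u * p v * Gamma m k p w u v)
       / (setsum_pi p C)^2"

end

theory Submission
  imports Defs "Jordan_Normal_Form.Schur_Decomposition"
begin

text \<open>
  Write \<open>A(\<xi>)\<close> for \<open>M\<^sup>(\<^sup>m\<^sup>)(\<xi>)\<close>. \<open>M(\<xi>)\<close> is the Laplacian of the complete graph on the
  alternatives with edge weights \<open>-M\<^sub>s\<^sub>t(\<xi>) \<ge> 0\<close>, so \<open>A(\<xi>)\<close> is positive semidefinite and
  linear in \<open>\<xi>\<close>, and \<open>tr (\<Sigma>(\<xi>) A(\<xi>')) = \<langle>R\<^sup>-\<^sup>1 S L \<Gamma>(\<xi>), \<xi>'\<rangle>\<close>.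
  For nonsingular \<open>A(\<xi>)\<close> the eigenvalues \<open>l\<^sub>i\<close> of \<open>\<Sigma>(\<xi>) A(\<xi>')\<close> are real and nonnegative,
  and \<open>det ((1 - t) A(\<xi>) + t A(\<xi>')) = det A(\<xi>) \<Prod>\<^sub>i (1 - t + t l\<^sub>i)\<close>.
  If \<open>\<xi>\<close> is optimal, the derivative \<open>\<Sum>\<^sub>i l\<^sub>i - (m - 1)\<close> of this product at \<open>t = 0\<close> is \<open>\<le> 0\<close>
  whenever \<open>\<xi>'\<close> is a vertex of the simplex, which is (ii); (iii) is just
  \<open>tr (\<Sigma>(\<xi>) A(\<xi>)) = m - 1\<close>. Conversely, under (ii)
  \<open>ln det A(\<xi>') - ln det A(\<xi>) = \<Sum>\<^sub>i ln l\<^sub>i \<le> \<Sum>\<^sub>i (l\<^sub>i - 1) = \<langle>R\<^sup>-\<^sup>1 S L \<Gamma>(\<xi>), \<xi>'\<rangle> - (m - 1) \<le> 0\<close>.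
\<close>

section \<open>Positive definite matrices\<close>

definition quad_form :: "nat \<Rightarrow> real mat \<Rightarrow> (nat \<Rightarrow> real) \<Rightarrow> real" where
  "quad_form n A x = (\<Sum>i<n. \<Sum>j<n. x i * A $$ (i, j) * x j)"

definition positive_semidefinite :: "nat \<Rightarrow> real mat \<Rightarrow> bool" where
  "positive_semidefinite n A \<longleftrightarrow> (\<forall>x. 0 \<le> quad_form n A x)"

definition positive_definite :: "nat \<Rightarrow> real mat \<Rightarrow> bool" where
  "positive_definite n A \<longleftrightarrow> (\<forall>x. (\<exists>i<n. x i \<noteq> 0) \<longrightarrow> 0 < quad_form n A x)"

definition symmetric_mat :: "nat \<Rightarrow> 'a mat \<Rightarrow> bool" where
  "symmetric_mat n A \<longleftrightarrow> (\<forall>i<n. \<forall>j<n. A $$ (i, j) = A $$ (j, i))"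

definition trace :: "'a::comm_ring_1 mat \<Rightarrow> 'a" where
  "trace A = (\<Sum>i<dim_row A. A $$ (i, i))"

lemma positive_definite_imp_semidefinite:
  assumes "positive_definite n A"
  shows "positive_semidefinite n A"
  unfolding positive_semidefinite_def
proof
  fix x :: "nat \<Rightarrow> real"
  show "0 \<le> quad_form n A x"
  proof (cases "\<exists>i<n. x i \<noteq> 0")
    case True
    then show ?thesis using assms unfolding positive_definite_def by force
  qed (simp add: quad_form_def)
qed

lemma mult_mat_vec_index_lessThan:
  "A \<in> carrier_mat n n \<Longrightarrow> v \<in> carrier_vec n \<Longrightarrow> i < n \<Longrightarrow>
   (A *\<^sub>v v) $ i = (\<Sum>j<n. A $$ (i, j) * v $ j)"
  by (auto simp: mult_mat_vec_def scalar_prod_def atLeast0LessThan)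

lemma trace_mult_comm:
  assumes "A \<in> carrier_mat n m" and "B \<in> carrier_mat m n"
  shows "trace (A * B) = trace (B * A)"
proof -
  have "trace (A * B) = (\<Sum>i<n. \<Sum>j<m. A $$ (i, j) * B $$ (j, i))"
    unfolding trace_def using assms by (intro sum.cong) (auto simp: scalar_prod_def atLeast0LessThan)
  also have "\<dots> = (\<Sum>j<m. \<Sum>i<n. B $$ (j, i) * A $$ (i, j))"
    by (subst sum.swap) (simp add: mult.commute)
  also have "\<dots> = trace (B * A)"
    unfolding trace_def using assms by (intro sum.cong) (auto simp: scalar_prod_def atLeast0LessThan)
  finally show ?thesis .
qed

lemma trace_map_of_real:
  "X \<in> carrier_mat n n \<Longrightarrow> trace (map_mat complex_of_real X) = of_real (trace X)"
  unfolding trace_def by (auto simp: of_real_sum intro!: sum.cong)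

lemma hermitian_form_real_symmetric:
  fixes M :: "real mat" and v :: "complex vec"
  assumes "symmetric_mat n M"
  shows "(\<Sum>i<n. cnj (v $ i) * (\<Sum>j<n. of_real (M $$ (i, j)) * v $ j)) =
     of_real (quad_form n M (\<lambda>i. Re (v $ i)) + quad_form n M (\<lambda>i. Im (v $ i)))"
proof (rule complex_eqI)
  let ?h = "\<Sum>i<n. cnj (v $ i) * (\<Sum>j<n. of_real (M $$ (i, j)) * v $ j)"
  have "Im ?h = (\<Sum>i<n. \<Sum>j<n. M $$ (i, j) * (Re (v $ i) * Im (v $ j)))
      - (\<Sum>i<n. \<Sum>j<n. M $$ (i, j) * (Im (v $ i) * Re (v $ j)))"
    by (simp add: Im_sum sum_distrib_left algebra_simps sum_subtractf)
  also have "(\<Sum>i<n. \<Sum>j<n. M $$ (i, j) * (Im (v $ i) * Re (v $ j)))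
      = (\<Sum>j<n. \<Sum>i<n. M $$ (i, j) * (Im (v $ i) * Re (v $ j)))"
    by (rule sum.swap)
  also have "\<dots> = (\<Sum>i<n. \<Sum>j<n. M $$ (i, j) * (Re (v $ i) * Im (v $ j)))"
    using assms unfolding symmetric_mat_def by (intro sum.cong refl) (auto simp: mult.commute)
  finally show "Im ?h = Im (of_real (quad_form n M (\<lambda>i. Re (v $ i)) + quad_form n M (\<lambda>i. Im (v $ i))))"
    by simp
  show "Re ?h = Re (of_real (quad_form n M (\<lambda>i. Re (v $ i)) + quad_form n M (\<lambda>i. Im (v $ i))))"
    by (simp add: Re_sum quad_form_def sum_distrib_left algebra_simps sum.distrib)
qed

lemma positive_definite_complex_pos:
  assumes pd_A: "positive_definite n A" and v: "v \<in> carrier_vec n" and v0: "v \<noteq> 0\<^sub>v n"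
  shows "0 < quad_form n A (\<lambda>i. Re (v $ i)) + quad_form n A (\<lambda>i. Im (v $ i))"
proof -
  from v0 v obtain i where i: "i < n" "v $ i \<noteq> 0" by (auto simp: vec_eq_iff)
  hence "Re (v $ i) \<noteq> 0 \<or> Im (v $ i) \<noteq> 0" by (simp add: complex_eq_iff)
  hence "0 < quad_form n A (\<lambda>i. Re (v $ i)) \<or> 0 < quad_form n A (\<lambda>i. Im (v $ i))"
    using pd_A i(1) unfolding positive_definite_def by (metis (mono_tags, lifting))
  moreover have "0 \<le> quad_form n A (\<lambda>i. Re (v $ i))" "0 \<le> quad_form n A (\<lambda>i. Im (v $ i))"
    using positive_definite_imp_semidefinite[OF pd_A] unfolding positive_semidefinite_def by auto
  ultimately show ?thesis by linarith
qed

text \<open>Rayleigh quotient: an eigenvector \<open>v\<close> of \<open>X\<close> for \<open>e\<close> gives \<open>v\<^sup>* B v = e v\<^sup>* A v\<close>, where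
  \<open>v\<^sup>* A v > 0\<close> and \<open>v\<^sup>* B v \<ge> 0\<close> are real.\<close>
lemma eigenvalue_pencil_real_nonneg:
  fixes A B X :: "real mat" and e :: complex
  assumes A: "A \<in> carrier_mat n n" and B: "B \<in> carrier_mat n n" and X: "X \<in> carrier_mat n n"
    and sym_A: "symmetric_mat n A" and sym_B: "symmetric_mat n B"
    and pd_A: "positive_definite n A" and psd_B: "positive_semidefinite n B"
    and AX: "A * X = B"
    and ev: "eigenvalue (map_mat complex_of_real X) e"
  shows "e = of_real (Re e) \<and> 0 \<le> Re e"
proof -
  let ?Xc = "map_mat complex_of_real X" and ?Ac = "map_mat complex_of_real A"
    and ?Bc = "map_mat complex_of_real B"
  from ev obtain v where "eigenvector ?Xc v e" unfolding eigenvalue_def by auto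
  hence v: "v \<in> carrier_vec n" and v0: "v \<noteq> 0\<^sub>v n" and Xv: "?Xc *\<^sub>v v = e \<cdot>\<^sub>v v"
    using X unfolding eigenvector_def by auto
  have "?Ac * ?Xc = ?Bc" using of_real_hom.mat_hom_mult[OF A X] AX by metis
  hence "?Bc *\<^sub>v v = ?Ac *\<^sub>v (?Xc *\<^sub>v v)"
    using assoc_mult_mat_vec[of ?Ac n n ?Xc n v] A X v by simp
  also have "\<dots> = e \<cdot>\<^sub>v (?Ac *\<^sub>v v)" using Xv A v by (simp add: mult_mat_vec)
  finally have BAv: "?Bc *\<^sub>v v = e \<cdot>\<^sub>v (?Ac *\<^sub>v v)" .
  let ?h = "\<lambda>M :: real mat. (\<Sum>i<n. cnj (v $ i) * (\<Sum>j<n. of_real (M $$ (i, j)) * v $ j))"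
  have "?h B = (\<Sum>i<n. cnj (v $ i) * (?Bc *\<^sub>v v) $ i)"
    using B v by (intro sum.cong refl) (subst mult_mat_vec_index_lessThan[of _ n], auto)
  also have "\<dots> = (\<Sum>i<n. cnj (v $ i) * (e * (?Ac *\<^sub>v v) $ i))"
    using BAv A v by (intro sum.cong refl) simp
  also have "\<dots> = (\<Sum>i<n. cnj (v $ i) * (e * (\<Sum>j<n. of_real (A $$ (i, j)) * v $ j)))"
    using A v by (intro sum.cong refl) (subst mult_mat_vec_index_lessThan[of _ n], auto)
  also have "\<dots> = e * ?h A"
    by (simp add: sum_distrib_left mult.left_commute)
  finally have hBA: "?h B = e * ?h A" .
  define a where "a = quad_form n A (\<lambda>i. Re (v $ i)) + quad_form n A (\<lambda>i. Im (v $ i))"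
  define b where "b = quad_form n B (\<lambda>i. Re (v $ i)) + quad_form n B (\<lambda>i. Im (v $ i))"
  have b: "0 \<le> b"
    unfolding b_def using psd_B unfolding positive_semidefinite_def by (simp add: add_nonneg_nonneg)
  have a: "0 < a" unfolding a_def by (rule positive_definite_complex_pos[OF pd_A v v0])
  have "?h A = of_real a" unfolding a_def by (rule hermitian_form_real_symmetric[OF sym_A])
  moreover have "?h B = of_real b" unfolding b_def by (rule hermitian_form_real_symmetric[OF sym_B])
  ultimately have "of_real b = e * of_real a" using hBA by simp
  hence "e = of_real (b / a)" using a by (metis of_real_divide of_real_eq_0_iff less_irrefl
      nonzero_mult_div_cancel_right)
  then show ?thesis using a b by simp
qed

lemma trace_similar:
  fixes P T Q :: "'a::comm_ring_1 mat"
  assumes P: "P \<in> carrier_mat n n" and T: "T \<in> carrier_mat n n" and Q: "Q \<in> carrier_mat n n"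
    and QP: "Q * P = 1\<^sub>m n"
  shows "trace (P * T * Q) = trace T"
proof -
  have "trace (P * T * Q) = trace (P * (T * Q))" using assoc_mult_mat[OF P T Q] by simp
  also have "\<dots> = trace ((T * Q) * P)" by (rule trace_mult_comm[OF P]) (use T Q in simp)
  also have "\<dots> = trace T" using assoc_mult_mat[OF T Q P] QP T by simp
  finally show ?thesis .
qed

lemma det_similar:
  fixes P T Q :: "'a::comm_ring_1 mat"
  assumes P: "P \<in> carrier_mat n n" and T: "T \<in> carrier_mat n n" and Q: "Q \<in> carrier_mat n n"
    and PQ: "P * Q = 1\<^sub>m n"
  shows "det (P * T * Q) = det T"
proof -
  have "det (P * T * Q) = det T * (det P * det Q)" using P T Q by (simp add: det_mult[of _ n])
  also have "det P * det Q = 1" using det_mult[OF P Q] PQ by simp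
  finally show ?thesis by simp
qed

lemma smult_one_add_similar:
  fixes P T Q :: "'a::comm_ring_1 mat"
  assumes P: "P \<in> carrier_mat n n" and T: "T \<in> carrier_mat n n" and Q: "Q \<in> carrier_mat n n"
    and PQ: "P * Q = 1\<^sub>m n"
  shows "c \<cdot>\<^sub>m 1\<^sub>m n + t \<cdot>\<^sub>m (P * T * Q) = P * (c \<cdot>\<^sub>m 1\<^sub>m n + t \<cdot>\<^sub>m T) * Q"
proof -
  have "P * (c \<cdot>\<^sub>m 1\<^sub>m n + t \<cdot>\<^sub>m T) = c \<cdot>\<^sub>m P + t \<cdot>\<^sub>m (P * T)"
    using mult_add_distrib_mat[OF P, of "c \<cdot>\<^sub>m 1\<^sub>m n" n "t \<cdot>\<^sub>m T"] P T
      mult_smult_distrib[OF P one_carrier_mat] mult_smult_distrib[OF P T] by simp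
  hence "P * (c \<cdot>\<^sub>m 1\<^sub>m n + t \<cdot>\<^sub>m T) * Q = c \<cdot>\<^sub>m (P * Q) + t \<cdot>\<^sub>m (P * T * Q)"
    using add_mult_distrib_mat[of "c \<cdot>\<^sub>m P" n n "t \<cdot>\<^sub>m (P * T)" Q n] P T Q
    by (simp add: mult_smult_assoc_mat[of _ n n _ n])
  then show ?thesis using PQ by simp
qed

lemma schur_form_real_nonneg_spectrum:
  fixes X :: "real mat"
  assumes X: "X \<in> carrier_mat n n"
    and ev: "\<And>e. eigenvalue (map_mat complex_of_real X) e \<Longrightarrow> e = of_real (Re e) \<and> 0 \<le> Re e"
  obtains P T Q l where "P \<in> carrier_mat n n" "T \<in> carrier_mat n n" "Q \<in> carrier_mat n n"
    "P * Q = 1\<^sub>m n" "Q * P = 1\<^sub>m n" "map_mat complex_of_real X = P * T * Q" "upper_triangular T"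
    "\<And>i. i < n \<Longrightarrow> T $$ (i, i) = of_real (l i) \<and> 0 \<le> l i"
proof -
  let ?Xc = "map_mat complex_of_real X"
  have Xc: "?Xc \<in> carrier_mat n n" using X by simp
  from char_poly_factorized[OF Xc] obtain es
    where cp: "char_poly ?Xc = (\<Prod>a\<leftarrow>es. [:- a, 1:])" by blast
  obtain T P Q where sd: "schur_decomposition ?Xc es = (T, P, Q)"
    by (cases "schur_decomposition ?Xc es") auto
  from schur_decomposition[OF Xc cp sd] have sim: "similar_mat_wit ?Xc T P Q"
    and ut: "upper_triangular T" and dg: "diag_mat T = es" by auto
  have T: "T \<in> carrier_mat n n" using similar_mat_witD2[OF Xc sim] by auto
  have "T $$ (i, i) = of_real (Re (T $$ (i, i))) \<and> 0 \<le> Re (T $$ (i, i))" if i: "i < n" for i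
  proof -
    have "T $$ (i, i) \<in> set es" using i T dg[symmetric] unfolding diag_mat_def by auto
    hence "poly (char_poly ?Xc) (T $$ (i, i)) = 0" unfolding cp poly_prod_list_zero_iff
      by (auto intro!: bexI[of _ "[:- (T $$ (i, i)), 1:]"])
    hence "eigenvalue ?Xc (T $$ (i, i))" using eigenvalue_root_char_poly[OF Xc] by simp
    then show ?thesis by (rule ev)
  qed
  with similar_mat_witD2[OF Xc sim] ut show ?thesis by (intro that[of P T Q "\<lambda>i. Re (T $$ (i, i))"]) auto
qed

lemma real_nonneg_spectrum_trace_det:
  fixes X :: "real mat"
  assumes X: "X \<in> carrier_mat n n"
    and ev: "\<And>e. eigenvalue (map_mat complex_of_real X) e \<Longrightarrow> e = of_real (Re e) \<and> 0 \<le> Re e"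
  shows "\<exists>l. (\<forall>i<n. 0 \<le> l i) \<and> trace X = (\<Sum>i<n. l i) \<and>
    (\<forall>c t. det (c \<cdot>\<^sub>m 1\<^sub>m n + t \<cdot>\<^sub>m X) = (\<Prod>i<n. c + t * l i))"
proof -
  obtain P T Q l where P: "P \<in> carrier_mat n n" and T: "T \<in> carrier_mat n n"
    and Q: "Q \<in> carrier_mat n n" and PQ: "P * Q = 1\<^sub>m n" and QP: "Q * P = 1\<^sub>m n"
    and XPTQ: "map_mat complex_of_real X = P * T * Q" and ut: "upper_triangular T"
    and Tii: "\<And>i. i < n \<Longrightarrow> T $$ (i, i) = of_real (l i) \<and> 0 \<le> l i"
    using schur_form_real_nonneg_spectrum[OF X ev] by blast
  have "of_real (trace X) = trace (P * T * Q)" using X XPTQ by (simp flip: trace_map_of_real)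
  also have "\<dots> = trace T" by (rule trace_similar[OF P T Q QP])
  also have "\<dots> = (\<Sum>i<n. of_real (l i))" unfolding trace_def using T Tii by (intro sum.cong) auto
  finally have "(of_real (trace X) :: complex) = of_real (\<Sum>i<n. l i)" by (simp add: of_real_sum)
  hence trace: "trace X = (\<Sum>i<n. l i)" by (simp only: of_real_eq_iff)
  have "det (c \<cdot>\<^sub>m 1\<^sub>m n + t \<cdot>\<^sub>m X) = (\<Prod>i<n. c + t * l i)" for c t
  proof -
    let ?U = "of_real c \<cdot>\<^sub>m 1\<^sub>m n + of_real t \<cdot>\<^sub>m T :: complex mat"
    have U: "?U \<in> carrier_mat n n" using T by simp
    have "map_mat complex_of_real (c \<cdot>\<^sub>m 1\<^sub>m n + t \<cdot>\<^sub>m X) =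
        of_real c \<cdot>\<^sub>m 1\<^sub>m n + of_real t \<cdot>\<^sub>m map_mat complex_of_real X"
      using X by (intro eq_matI) auto
    also have "\<dots> = P * ?U * Q" unfolding XPTQ by (rule smult_one_add_similar[OF P T Q PQ])
    finally have "of_real (det (c \<cdot>\<^sub>m 1\<^sub>m n + t \<cdot>\<^sub>m X)) = det (P * ?U * Q)"
      by (metis of_real_hom.hom_det)
    also have "\<dots> = prod_list (diag_mat ?U)"
      unfolding det_similar[OF P U Q PQ]
      by (rule det_upper_triangular[OF _ U]) (use ut T in \<open>auto simp: upper_triangular_def\<close>)
    also have "\<dots> = (\<Prod>i<n. of_real c + of_real t * of_real (l i))"
      unfolding prod_list_diag_prod using T Tii by (auto simp: atLeast0LessThan intro!: prod.cong)
    finally have "(of_real (det (c \<cdot>\<^sub>m 1\<^sub>m n + t \<cdot>\<^sub>m X)) :: complex) = of_real (\<Prod>i<n. c + t * l i)"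
      by (simp add: of_real_prod)
    then show ?thesis by (simp only: of_real_eq_iff)
  qed
  with Tii trace show ?thesis by blast
qed

text \<open>The \<open>l i\<close> are the eigenvalues of \<open>A\<^sup>-\<^sup>1 B\<close>.\<close>
lemma det_pencil_pd_psd:
  assumes A: "A \<in> carrier_mat n n" and B: "B \<in> carrier_mat n n" and Ai: "Ai \<in> carrier_mat n n"
    and sym_A: "symmetric_mat n A" and sym_B: "symmetric_mat n B"
    and pd_A: "positive_definite n A" and psd_B: "positive_semidefinite n B"
    and inv: "A * Ai = 1\<^sub>m n"
  shows "\<exists>l. (\<forall>i<n. 0 \<le> l i) \<and> trace (Ai * B) = (\<Sum>i<n. l i) \<and>
    (\<forall>c t. det (c \<cdot>\<^sub>m A + t \<cdot>\<^sub>m B) = det A * (\<Prod>i<n. c + t * l i))"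
proof -
  define X where "X = Ai * B"
  have X: "X \<in> carrier_mat n n" unfolding X_def using Ai B by simp
  have AX: "A * X = B" unfolding X_def using assoc_mult_mat[OF A Ai B, symmetric] inv B by simp
  obtain l where l: "\<forall>i<n. 0 \<le> l i" "trace X = (\<Sum>i<n. l i)"
    and det_X: "\<And>c t. det (c \<cdot>\<^sub>m 1\<^sub>m n + t \<cdot>\<^sub>m X) = (\<Prod>i<n. c + t * l i)"
    using real_nonneg_spectrum_trace_det[OF X eigenvalue_pencil_real_nonneg[OF A B X sym_A sym_B pd_A psd_B AX]]
    by blast
  have "c \<cdot>\<^sub>m A + t \<cdot>\<^sub>m B = A * (c \<cdot>\<^sub>m 1\<^sub>m n + t \<cdot>\<^sub>m X)" for c t
  proof -
    have "A * (c \<cdot>\<^sub>m 1\<^sub>m n + t \<cdot>\<^sub>m X) = A * (c \<cdot>\<^sub>m 1\<^sub>m n) + A * (t \<cdot>\<^sub>m X)"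
      by (rule mult_add_distrib_mat[OF A]) (use X in auto)
    also have "\<dots> = c \<cdot>\<^sub>m A + t \<cdot>\<^sub>m B"
      using mult_smult_distrib[OF A one_carrier_mat] mult_smult_distrib[OF A X] A AX by simp
    finally show ?thesis by simp
  qed
  hence "det (c \<cdot>\<^sub>m A + t \<cdot>\<^sub>m B) = det A * (\<Prod>i<n. c + t * l i)" for c t
    using det_mult[OF A, of "c \<cdot>\<^sub>m 1\<^sub>m n + t \<cdot>\<^sub>m X"] X det_X by simp
  with l show ?thesis unfolding X_def by blast
qed

lemma positive_definite_one: "positive_definite n (1\<^sub>m n)"
  unfolding positive_definite_def
proof (intro allI impI)
  fix x :: "nat \<Rightarrow> real"
  assume "\<exists>i<n. x i \<noteq> 0"
  then obtain i where i: "i < n" "x i \<noteq> 0" by blast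
  have "quad_form n (1\<^sub>m n) x = (\<Sum>i<n. x i * x i)" unfolding quad_form_def
    by (intro sum.cong refl) (simp add: if_distrib if_distribR cong: if_cong)
  also have "\<dots> > 0"
    using i by (intro sum_pos2[of "{..<n}" i]) (auto simp: zero_less_mult_iff linorder_neq_iff)
  finally show "0 < quad_form n (1\<^sub>m n) x" .
qed

lemma symmetric_mat_one: "symmetric_mat n (1\<^sub>m n)"
  unfolding symmetric_mat_def by auto

lemma positive_semidefinite_det_nonneg:
  assumes B: "B \<in> carrier_mat n n" and "symmetric_mat n B" and "positive_semidefinite n B"
  shows "0 \<le> det B"
proof -
  obtain l where l: "\<forall>i<n. 0 \<le> l i"
    and det: "\<And>c t. det (c \<cdot>\<^sub>m 1\<^sub>m n + t \<cdot>\<^sub>m B) = det (1\<^sub>m n) * (\<Prod>i<n. c + t * l i)"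
    using det_pencil_pd_psd[OF one_carrier_mat B one_carrier_mat symmetric_mat_one assms(2)
        positive_definite_one assms(3)] by auto
  have "0 \<cdot>\<^sub>m 1\<^sub>m n + 1 \<cdot>\<^sub>m B = B" using B by (intro eq_matI) auto
  hence "det B = (\<Prod>i<n. l i)" using det[of 0 1] by simp
  then show ?thesis using l by (auto intro: prod_nonneg)
qed

lemma quad_form_add_smult:
  assumes "symmetric_mat n A"
  shows "quad_form n A (\<lambda>i. x i + s * y i) =
    quad_form n A x + 2 * s * (\<Sum>i<n. y i * (\<Sum>j<n. A $$ (i, j) * x j)) + s\<^sup>2 * quad_form n A y"
proof -
  have "(\<Sum>i<n. \<Sum>j<n. x i * A $$ (i, j) * y j) = (\<Sum>j<n. \<Sum>i<n. x i * A $$ (i, j) * y j)"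
    by (rule sum.swap)
  also have "\<dots> = (\<Sum>j<n. y j * (\<Sum>i<n. A $$ (j, i) * x i))"
    using assms unfolding symmetric_mat_def by (auto simp: sum_distrib_left mult_ac intro!: sum.cong)
  finally have "(\<Sum>i<n. \<Sum>j<n. x i * A $$ (i, j) * y j) = (\<Sum>i<n. y i * (\<Sum>j<n. A $$ (i, j) * x j))" .
  moreover have "quad_form n A (\<lambda>i. x i + s * y i) = quad_form n A x
      + s * (\<Sum>i<n. \<Sum>j<n. x i * A $$ (i, j) * y j)
      + s * (\<Sum>i<n. y i * (\<Sum>j<n. A $$ (i, j) * x j)) + s\<^sup>2 * quad_form n A y"
    unfolding quad_form_def by (simp add: algebra_simps power2_eq_square sum.distrib sum_distrib_left)
  ultimately show ?thesis by simp
qed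

text \<open>If \<open>x\<^sup>T A x = 0\<close> and \<open>y = A x\<close>, then \<open>(x + s y)\<^sup>T A (x + s y) = 2 s |y|\<^sup>2 + s\<^sup>2 y\<^sup>T A y\<close>
  is negative for small \<open>s < 0\<close> unless \<open>y = 0\<close>.\<close>
lemma positive_semidefinite_quad_form_eq_0_imp:
  assumes sym_A: "symmetric_mat n A" and psd_A: "positive_semidefinite n A"
    and q0: "quad_form n A x = 0" and i: "i < n"
  shows "(\<Sum>j<n. A $$ (i, j) * x j) = 0"
proof -
  define y where "y i = (\<Sum>j<n. A $$ (i, j) * x j)" for i
  define S where "S = (\<Sum>i<n. y i * y i)"
  define Q where "Q = quad_form n A y"
  have Q: "0 \<le> Q" unfolding Q_def using psd_A unfolding positive_semidefinite_def by simp
  define s where "s = - S / (Q + 1)"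
  have "0 \<le> quad_form n A (\<lambda>i. x i + s * y i)"
    using psd_A unfolding positive_semidefinite_def by simp
  also have "\<dots> = s * (2 * S + s * Q)"
    using quad_form_add_smult[OF sym_A, of x s y] q0 unfolding S_def Q_def y_def
    by (simp add: power2_eq_square algebra_simps)
  finally have nonneg: "0 \<le> s * (2 * S + s * Q)" .
  have "S = 0"
  proof (rule ccontr)
    assume "S \<noteq> 0"
    moreover have "0 \<le> S" unfolding S_def by (intro sum_nonneg) simp
    ultimately have S: "0 < S" by simp
    hence "s < 0" using Q unfolding s_def by (simp add: divide_pos_pos)
    moreover have "Q / (Q + 1) \<le> 1" using Q by simp
    hence "S * (Q / (Q + 1)) \<le> S" using S by (intro mult_left_le) auto
    hence "0 < 2 * S + s * Q" using S unfolding s_def by (simp add: algebra_simps)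
    ultimately have "s * (2 * S + s * Q) < 0" by (rule mult_neg_pos)
    with nonneg show False by simp
  qed
  hence "\<forall>i<n. y i * y i = 0" unfolding S_def
    using sum_nonneg_eq_0_iff[of "{..<n}" "\<lambda>i. y i * y i"] by simp
  then show ?thesis using i unfolding y_def by simp
qed

lemma positive_semidefinite_det_nonzero_imp_definite:
  assumes A: "A \<in> carrier_mat n n" and sym_A: "symmetric_mat n A"
    and psd_A: "positive_semidefinite n A" and det: "det A \<noteq> 0"
  shows "positive_definite n A"
  unfolding positive_definite_def
proof (intro allI impI)
  fix x :: "nat \<Rightarrow> real"
  assume "\<exists>i<n. x i \<noteq> 0"
  then obtain i where i: "i < n" "x i \<noteq> 0" by blast
  show "0 < quad_form n A x"
  proof (rule ccontr)
    assume "\<not> 0 < quad_form n A x"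
    hence q0: "quad_form n A x = 0"
      using psd_A unfolding positive_semidefinite_def by (meson antisym not_le)
    have "A *\<^sub>v vec n x = 0\<^sub>v n"
    proof (rule eq_vecI)
      fix j
      assume "j < dim_vec (0\<^sub>v n :: real vec)"
      hence j: "j < n" by simp
      have "(A *\<^sub>v vec n x) $ j = (\<Sum>l<n. A $$ (j, l) * vec n x $ l)"
        by (rule mult_mat_vec_index_lessThan[OF A _ j]) simp
      also have "\<dots> = (\<Sum>l<n. A $$ (j, l) * x l)" by (intro sum.cong) auto
      also have "\<dots> = 0" by (rule positive_semidefinite_quad_form_eq_0_imp[OF sym_A psd_A q0 j])
      finally show "(A *\<^sub>v vec n x) $ j = 0\<^sub>v n $ j" using j by simp
    qed (use A in simp)
    moreover have "vec n x \<noteq> 0\<^sub>v n" using i by (metis index_vec index_zero_vec(1))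
    ultimately have "det A = 0" using det_0_iff_vec_prod_zero[OF A] vec_carrier by blast
    with det show False by simp
  qed
qed

lemma positive_definite_det_nonzero:
  assumes A: "A \<in> carrier_mat n n" and pd_A: "positive_definite n A"
  shows "det A \<noteq> 0"
proof
  assume "det A = 0"
  then obtain v where v: "v \<in> carrier_vec n" "v \<noteq> 0\<^sub>v n" "A *\<^sub>v v = 0\<^sub>v n"
    using det_0_iff_vec_prod_zero[OF A] by blast
  from v obtain i where i: "i < n" "v $ i \<noteq> 0" by (auto simp: vec_eq_iff)
  have "quad_form n A (\<lambda>i. v $ i) = (\<Sum>i<n. v $ i * (\<Sum>j<n. A $$ (i, j) * v $ j))"
    unfolding quad_form_def by (simp add: sum_distrib_left mult.assoc)
  also have "\<dots> = (\<Sum>i<n. v $ i * (A *\<^sub>v v) $ i)"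
    using A v(1) by (intro sum.cong refl) (subst mult_mat_vec_index_lessThan[of _ n], auto)
  also have "\<dots> = 0" using v(3) by simp
  finally have "quad_form n A (\<lambda>i. v $ i) = 0" .
  moreover have "0 < quad_form n A (\<lambda>i. v $ i)"
    using pd_A i unfolding positive_definite_def by (metis (mono_tags, lifting))
  ultimately show False by simp
qed

lemma positive_definite_det_pos:
  assumes A: "A \<in> carrier_mat n n" and sym_A: "symmetric_mat n A" and pd_A: "positive_definite n A"
  shows "0 < det A"
  using positive_definite_det_nonzero[OF A pd_A]
    positive_semidefinite_det_nonneg[OF A sym_A positive_definite_imp_semidefinite[OF pd_A]] by simp

lemma symmetric_mat_inverse:
  fixes A Ai :: "'a::comm_ring_1 mat"
  assumes A: "A \<in> carrier_mat n n" and sym_A: "symmetric_mat n A" and Ai: "Ai \<in> carrier_mat n n"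
    and inv: "A * Ai = 1\<^sub>m n"
  shows "symmetric_mat n Ai"
proof -
  have AT: "transpose_mat A = A" using A sym_A unfolding symmetric_mat_def by (intro eq_matI) auto
  have "transpose_mat Ai * A = transpose_mat (A * Ai)" using transpose_mult[OF A Ai] AT by simp
  also have "\<dots> = 1\<^sub>m n" using inv by simp
  finally have "transpose_mat Ai * A = 1\<^sub>m n" .
  hence "transpose_mat Ai = transpose_mat Ai * A * Ai"
    using Ai assoc_mult_mat[of "transpose_mat Ai" n n A n Ai] A inv by simp
  also have "\<dots> = Ai" using \<open>transpose_mat Ai * A = 1\<^sub>m n\<close> Ai by simp
  finally have "transpose_mat Ai = Ai" .
  then show ?thesis unfolding symmetric_mat_def using Ai by (metis index_transpose_mat(1) carrier_matD)
qed

text \<open>At \<open>t = 0\<close> the product equals \<open>1\<close> and has derivative \<open>\<Sum>i<n. l i - 1\<close>.\<close>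
lemma sum_le_if_prod_affine_le_1:
  fixes l :: "nat \<Rightarrow> real"
  assumes le_1: "\<And>t. 0 < t \<Longrightarrow> t < 1 \<Longrightarrow> (\<Prod>i<n. 1 - t + t * l i) \<le> 1"
  shows "(\<Sum>i<n. l i) \<le> real n"
proof (rule ccontr)
  assume "\<not> (\<Sum>i<n. l i) \<le> real n"
  hence pos: "0 < (\<Sum>i<n. l i - 1)" by (simp add: sum_subtractf)
  define P where "P t = (\<Prod>i<n. 1 - t + t * l i)" for t :: real
  have "((\<lambda>t. \<Prod>i\<in>{..<n}. 1 - t + t * l i) has_field_derivative
      (\<Sum>i\<in>{..<n}. (l i - 1) * (\<Prod>j\<in>{..<n} - {i}. 1 - 0 + 0 * l j))) (at 0)"
    by (rule has_field_derivative_prod) (auto intro!: derivative_eq_intros)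
  hence "DERIV P 0 :> (\<Sum>i<n. l i - 1)" unfolding P_def by simp
  from DERIV_pos_inc_right[OF this pos] obtain d where d: "0 < d"
    and inc: "\<And>h. 0 < h \<Longrightarrow> h < d \<Longrightarrow> P 0 < P (0 + h)" by blast
  define h where "h = min (d / 2) (1 / 2)"
  have "0 < h" "h < d" "h < 1" using d unfolding h_def by auto
  hence "P 0 < P h" using inc by simp
  moreover have "P h \<le> 1" unfolding P_def using le_1 \<open>0 < h\<close> \<open>h < 1\<close> by simp
  ultimately show False unfolding P_def by simp
qed

text \<open>First-order condition for a maximum of \<open>det\<close> at \<open>A\<close> in the direction of \<open>B\<close>.\<close>
lemma trace_le_dim_if_det_segment_le:
  assumes A: "A \<in> carrier_mat n n" and B: "B \<in> carrier_mat n n" and Ai: "Ai \<in> carrier_mat n n"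
    and sym_A: "symmetric_mat n A" and sym_B: "symmetric_mat n B"
    and pd_A: "positive_definite n A" and psd_B: "positive_semidefinite n B"
    and inv: "A * Ai = 1\<^sub>m n"
    and le: "\<And>t. 0 < t \<Longrightarrow> t < 1 \<Longrightarrow> det ((1 - t) \<cdot>\<^sub>m A + t \<cdot>\<^sub>m B) \<le> det A"
  shows "trace (Ai * B) \<le> real n"
proof -
  obtain l where "\<forall>i<n. 0 \<le> l i" and trace: "trace (Ai * B) = (\<Sum>i<n. l i)"
    and det: "\<And>c t. det (c \<cdot>\<^sub>m A + t \<cdot>\<^sub>m B) = det A * (\<Prod>i<n. c + t * l i)"
    using det_pencil_pd_psd[OF A B Ai sym_A sym_B pd_A psd_B inv] by blast
  have "0 < det A" by (rule positive_definite_det_pos[OF A sym_A pd_A])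
  hence "(\<Prod>i<n. 1 - t + t * l i) \<le> 1" if "0 < t" "t < 1" for t
    using le[OF that] det[of "1 - t" t] by simp
  then show ?thesis unfolding trace by (rule sum_le_if_prod_affine_le_1)
qed

text \<open>Concavity of \<open>ln det\<close>: \<open>ln det B \<le> ln det A + tr (A\<^sup>-\<^sup>1 (B - A))\<close>, from \<open>ln x \<le> x - 1\<close>
  applied to the eigenvalues of \<open>A\<^sup>-\<^sup>1 B\<close>.\<close>
lemma ln_det_le_trace:
  assumes A: "A \<in> carrier_mat n n" and B: "B \<in> carrier_mat n n" and Ai: "Ai \<in> carrier_mat n n"
    and sym_A: "symmetric_mat n A" and sym_B: "symmetric_mat n B"
    and pd_A: "positive_definite n A" and psd_B: "positive_semidefinite n B"
    and inv: "A * Ai = 1\<^sub>m n" and det_B: "0 < det B"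
  shows "ln (det B) - ln (det A) \<le> trace (Ai * B) - real n"
proof -
  obtain l where l: "\<forall>i<n. 0 \<le> l i" and trace: "trace (Ai * B) = (\<Sum>i<n. l i)"
    and det: "\<And>c t. det (c \<cdot>\<^sub>m A + t \<cdot>\<^sub>m B) = det A * (\<Prod>i<n. c + t * l i)"
    using det_pencil_pd_psd[OF A B Ai sym_A sym_B pd_A psd_B inv] by blast
  have det_A: "0 < det A" by (rule positive_definite_det_pos[OF A sym_A pd_A])
  have "0 \<cdot>\<^sub>m A + 1 \<cdot>\<^sub>m B = B" using A B by (intro eq_matI) auto
  hence det_B_eq: "det B = det A * (\<Prod>i<n. l i)" using det[of 0 1] by simp
  have l_pos: "0 < l i" if "i < n" for i
  proof (rule ccontr)
    assume "\<not> 0 < l i"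
    hence "(\<Prod>i<n. l i) = 0" using l that by (intro prod_zero) force+
    with det_B det_B_eq show False by simp
  qed
  have "0 < (\<Prod>i<n. l i)" using l_pos by (intro prod_pos) auto
  hence "ln (det B) = ln (det A) + ln (\<Prod>i<n. l i)" unfolding det_B_eq using det_A by (intro ln_mult_pos)
  moreover have "ln (\<Prod>i<n. l i) = (\<Sum>i<n. ln (l i))"
    using l_pos by (intro ln_prod) (auto simp: order_less_imp_not_eq2)
  ultimately have "ln (det B) - ln (det A) = (\<Sum>i<n. ln (l i))" by simp
  also have "\<dots> \<le> (\<Sum>i<n. l i - 1)" by (rule sum_mono) (use l_pos ln_le_minus_one in auto)
  also have "\<dots> = trace (Ai * B) - real n" by (simp add: trace sum_subtractf)
  finally show ?thesis .
qed

section \<open>Weighted Laplacians\<close>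

text \<open>The Laplacian of the complete graph on \<open>{..<m}\<close> with symmetric edge weights \<open>a\<close>;
  \<open>reduced_laplacian n a\<close> deletes the last vertex \<open>n\<close> of the graph on \<open>{..<Suc n}\<close>.\<close>
definition laplacian :: "nat \<Rightarrow> (nat \<Rightarrow> nat \<Rightarrow> real) \<Rightarrow> nat \<Rightarrow> nat \<Rightarrow> real" where
  "laplacian m a s t = (if s = t then (\<Sum>u\<in>{..<m} - {s}. a s u) else - a s t)"

definition reduced_laplacian :: "nat \<Rightarrow> (nat \<Rightarrow> nat \<Rightarrow> real) \<Rightarrow> real mat" where
  "reduced_laplacian n a = mat n n (\<lambda>(s, t). laplacian (Suc n) a s t)"

definition increasing_pairs :: "nat \<Rightarrow> (nat \<times> nat) set" where
  "increasing_pairs m = {(s, t). s < t \<and> t < m}"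

definition zero_extend :: "nat \<Rightarrow> 'a::zero mat \<Rightarrow> nat \<Rightarrow> nat \<Rightarrow> 'a" where
  "zero_extend n A s t = (if s < n \<and> t < n then A $$ (s, t) else 0)"

lemma finite_increasing_pairs: "finite (increasing_pairs m)"
  by (rule finite_subset[of _ "{..<m} \<times> {..<m}"]) (auto simp: increasing_pairs_def)

lemma reduced_laplacian_symmetric:
  "(\<And>s t. a s t = a t s) \<Longrightarrow> symmetric_mat n (reduced_laplacian n a)"
  unfolding symmetric_mat_def reduced_laplacian_def laplacian_def by auto

lemma reduced_laplacian_linear:
  "reduced_laplacian n (\<lambda>s t. \<alpha> * a s t + \<beta> * b s t) =
    \<alpha> \<cdot>\<^sub>m reduced_laplacian n a + \<beta> \<cdot>\<^sub>m reduced_laplacian n b"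
  unfolding reduced_laplacian_def laplacian_def
  by (intro eq_matI) (auto simp: sum.distrib sum_distrib_left)

lemma sum_offdiagonal_symmetric:
  fixes f :: "nat \<Rightarrow> nat \<Rightarrow> real"
  assumes sym: "\<And>s t. f s t = f t s"
  shows "(\<Sum>s<m. \<Sum>t<m. if s \<noteq> t then f s t else 0) = 2 * (\<Sum>(s, t)\<in>increasing_pairs m. f s t)"
proof -
  have upper: "(\<Sum>s<m. \<Sum>t<m. if s < t then f s t else 0) = (\<Sum>(s, t)\<in>increasing_pairs m. f s t)"
  proof -
    have "(\<Sum>t<m. if s < t then f s t else 0) = (\<Sum>t\<in>{s<..<m}. f s t)" for s
    proof -
      have "{t \<in> {..<m}. s < t} = {s<..<m}" by auto
      then show ?thesis using sum.inter_filter[of "{..<m}" "f s" "\<lambda>t. s < t"] by simp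
    qed
    moreover have "increasing_pairs m = Product_Type.Sigma {..<m} (\<lambda>s. {s<..<m})"
      unfolding increasing_pairs_def by auto
    ultimately show ?thesis by (simp add: sum.Sigma)
  qed
  have "(\<Sum>s<m. \<Sum>t<m. if t < s then f s t else 0) = (\<Sum>t<m. \<Sum>s<m. if t < s then f s t else 0)"
    by (rule sum.swap)
  also have "\<dots> = (\<Sum>s<m. \<Sum>t<m. if s < t then f s t else 0)"
    using sym by (intro sum.cong refl) auto
  finally have lower: "(\<Sum>s<m. \<Sum>t<m. if t < s then f s t else 0) =
      (\<Sum>s<m. \<Sum>t<m. if s < t then f s t else 0)" .
  have "(\<Sum>s<m. \<Sum>t<m. if s \<noteq> t then f s t else 0) =
      (\<Sum>s<m. \<Sum>t<m. (if s < t then f s t else 0) + (if t < s then f s t else 0))"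
    by (intro sum.cong refl) auto
  also have "\<dots> = (\<Sum>s<m. \<Sum>t<m. if s < t then f s t else 0) + (\<Sum>s<m. \<Sum>t<m. if t < s then f s t else 0)"
    by (simp add: sum.distrib)
  finally show ?thesis using upper lower by simp
qed

text \<open>Row \<open>s\<close> contributes \<open>\<Sum>\<^sub>t a s t (G s s - G s t)\<close>; symmetrising in \<open>(s, t)\<close> gives the sum
  over edges.\<close>
lemma sum_mult_reduced_laplacian:
  fixes G :: "nat \<Rightarrow> nat \<Rightarrow> real"
  assumes sym_a: "\<And>s t. a s t = a t s" and sym_G: "\<And>s t. G s t = G t s"
    and G_n: "\<And>t. G n t = 0"
  shows "(\<Sum>s<n. \<Sum>t<n. G s t * laplacian (Suc n) a s t) =
    (\<Sum>(s, t)\<in>increasing_pairs (Suc n). a s t * (G s s + G t t - 2 * G s t))"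
proof -
  let ?m = "Suc n"
  define F where "F s t = (if s \<noteq> t then a s t * (G s s - G s t) else 0)" for s t
  have row: "(\<Sum>t<?m. G s t * laplacian ?m a s t) = (\<Sum>t<?m. F s t)" if "s < ?m" for s
  proof -
    have "(\<Sum>t<?m. G s t * laplacian ?m a s t) =
        G s s * laplacian ?m a s s + (\<Sum>t\<in>{..<?m} - {s}. G s t * laplacian ?m a s t)"
      using that by (subst sum.remove[of _ s]) auto
    also have "\<dots> = (\<Sum>t\<in>{..<?m} - {s}. a s t * (G s s - G s t))"
      by (simp add: laplacian_def sum_distrib_left sum_subtractf sum_negf algebra_simps)
    also have "\<dots> = (\<Sum>t<?m. F s t)"
      unfolding F_def sum.inter_filter[OF finite_lessThan, symmetric] by (intro sum.cong) auto
    finally show ?thesis .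
  qed
  have "(\<Sum>s<n. \<Sum>t<n. G s t * laplacian ?m a s t) = (\<Sum>s<?m. \<Sum>t<?m. G s t * laplacian ?m a s t)"
    using G_n sym_G by (simp add: sum.lessThan_Suc)
  also have "\<dots> = (\<Sum>s<?m. \<Sum>t<?m. F s t)" using row by simp
  also have "\<dots> = (\<Sum>s<?m. \<Sum>t<?m. F s t + F t s) / 2"
    by (simp add: sum.distrib sum.swap[of "\<lambda>s t. F t s"])
  also have "\<dots> = (\<Sum>s<?m. \<Sum>t<?m. if s \<noteq> t then a s t * (G s s + G t t - 2 * G s t) else 0) / 2"
    unfolding F_def using sym_a sym_G by (intro arg_cong[where f = "\<lambda>x. x / 2"] sum.cong refl)
      (auto simp: algebra_simps)
  also have "\<dots> = (\<Sum>(s, t)\<in>increasing_pairs ?m. a s t * (G s s + G t t - 2 * G s t))"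
    by (subst sum_offdiagonal_symmetric) (auto simp: sym_a sym_G)
  finally show ?thesis .
qed

lemma quad_form_reduced_laplacian:
  assumes "\<And>s t. a s t = a t s" and "x n = 0"
  shows "quad_form n (reduced_laplacian n a) x =
    (\<Sum>(s, t)\<in>increasing_pairs (Suc n). a s t * (x s - x t)\<^sup>2)"
proof -
  have "quad_form n (reduced_laplacian n a) x = (\<Sum>s<n. \<Sum>t<n. (x s * x t) * laplacian (Suc n) a s t)"
    unfolding quad_form_def reduced_laplacian_def by (intro sum.cong refl) (auto simp: mult_ac)
  also have "\<dots> = (\<Sum>(s, t)\<in>increasing_pairs (Suc n). a s t * (x s * x s + x t * x t - 2 * (x s * x t)))"
    by (rule sum_mult_reduced_laplacian) (auto simp: assms mult.commute)
  also have "\<dots> = (\<Sum>(s, t)\<in>increasing_pairs (Suc n). a s t * (x s - x t)\<^sup>2)"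
    by (intro sum.cong refl) (auto simp: power2_eq_square algebra_simps)
  finally show ?thesis .
qed

lemma quad_form_zero_extend: "quad_form n A (\<lambda>i. if i < n then x i else 0) = quad_form n A x"
  unfolding quad_form_def by simp

lemma reduced_laplacian_positive_semidefinite:
  assumes sym: "\<And>s t. a s t = a t s" and nonneg: "\<And>s t. 0 \<le> a s t"
  shows "positive_semidefinite n (reduced_laplacian n a)"
  unfolding positive_semidefinite_def
proof
  fix x :: "nat \<Rightarrow> real"
  define y where "y j = (if j < n then x j else 0)" for j
  have "0 \<le> (\<Sum>(s, t)\<in>increasing_pairs (Suc n). a s t * (y s - y t)\<^sup>2)"
    by (intro sum_nonneg) (auto intro!: mult_nonneg_nonneg nonneg)
  also have "\<dots> = quad_form n (reduced_laplacian n a) y"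
    by (rule quad_form_reduced_laplacian[symmetric]) (auto simp: sym y_def)
  also have "\<dots> = quad_form n (reduced_laplacian n a) x"
    unfolding y_def by (rule quad_form_zero_extend)
  finally show "0 \<le> quad_form n (reduced_laplacian n a) x" .
qed

text \<open>With \<open>x n = 0\<close> the edge \<open>{i, n}\<close> alone contributes \<open>a i n * (x i)\<^sup>2 > 0\<close>.\<close>
lemma reduced_laplacian_positive_definite:
  assumes sym: "\<And>s t. a s t = a t s" and nonneg: "\<And>s t. 0 \<le> a s t"
    and pos: "\<And>s. s < n \<Longrightarrow> 0 < a s n"
  shows "positive_definite n (reduced_laplacian n a)"
  unfolding positive_definite_def
proof (intro allI impI)
  fix x :: "nat \<Rightarrow> real"
  assume "\<exists>i<n. x i \<noteq> 0"
  then obtain i where i: "i < n" "x i \<noteq> 0" by blast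
  define y where "y j = (if j < n then x j else 0)" for j
  let ?f = "\<lambda>(s, t). a s t * (y s - y t)\<^sup>2"
  have "0 < ?f (i, n)" using i pos[of i] unfolding y_def by simp
  also have "\<dots> \<le> sum ?f (increasing_pairs (Suc n))"
    using i by (intro member_le_sum finite_increasing_pairs)
      (auto simp: increasing_pairs_def intro!: mult_nonneg_nonneg nonneg)
  also have "\<dots> = quad_form n (reduced_laplacian n a) y"
    by (rule quad_form_reduced_laplacian[symmetric]) (auto simp: sym y_def)
  also have "\<dots> = quad_form n (reduced_laplacian n a) x"
    unfolding y_def by (rule quad_form_zero_extend)
  finally show "0 < quad_form n (reduced_laplacian n a) x" .
qed

lemma trace_mult_reduced_laplacian:
  assumes S: "S \<in> carrier_mat n n" and sym_S: "symmetric_mat n S" and sym_a: "\<And>s t. a s t = a t s"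
  shows "trace (S * reduced_laplacian n a) = (\<Sum>(s, t)\<in>increasing_pairs (Suc n).
    a s t * (zero_extend n S s s + zero_extend n S t t - 2 * zero_extend n S s t))"
proof -
  have "trace (S * reduced_laplacian n a) = (\<Sum>s<n. \<Sum>t<n. zero_extend n S s t * laplacian (Suc n) a s t)"
    unfolding trace_def using S
    by (auto simp: reduced_laplacian_def scalar_prod_def atLeast0LessThan zero_extend_def laplacian_def
        sym_a intro!: sum.cong)
  also have "\<dots> = (\<Sum>(s, t)\<in>increasing_pairs (Suc n).
      a s t * (zero_extend n S s s + zero_extend n S t t - 2 * zero_extend n S s t))"
    using sym_S by (intro sum_mult_reduced_laplacian sym_a) (auto simp: zero_extend_def symmetric_mat_def)
  finally show ?thesis .
qed

section \<open>The information matrix\<close>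

text \<open>The edge weight \<open>-M\<^sub>s\<^sub>t(\<xi>)\<close>, written so that it is visibly linear in \<open>\<xi>\<close>.\<close>
definition info_weight :: "nat \<Rightarrow> nat \<Rightarrow> (nat \<Rightarrow> real) \<Rightarrow> (nat set \<Rightarrow> real) \<Rightarrow> nat \<Rightarrow> nat \<Rightarrow> real" where
  "info_weight m k p w s t =
    (\<Sum>C\<in>choice_sets m k. w C * (if s \<in> C \<and> t \<in> C then p s * p t / (setsum_pi p C)\<^sup>2 else 0))"

lemma finite_choice_sets: "finite (choice_sets m k)"
  unfolding choice_sets_def by (rule finite_subset[of _ "Pow {..<m}"]) auto

lemma M_off_eq_info_weight: "M_off m k p w s t = - info_weight m k p w s t"
proof -
  have "info_weight m k p w s t =
      p s * p t * (\<Sum>C\<in>{C \<in> choice_sets m k. s \<in> C \<and> t \<in> C}. w C / (setsum_pi p C)\<^sup>2)"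
    unfolding info_weight_def sum.inter_filter[OF finite_choice_sets] sum_distrib_left
    by (intro sum.cong refl) auto
  then show ?thesis unfolding M_off_def by simp
qed

lemma Mred_eq_reduced_laplacian:
  assumes "0 < m"
  shows "Mred m k p w = reduced_laplacian (m - 1) (info_weight m k p w)"
proof -
  have m: "Suc (m - 1) = m" using assms by simp
  show ?thesis
    unfolding Mred_def reduced_laplacian_def M_entry_def laplacian_def M_off_eq_info_weight m
    by (intro eq_matI) (auto simp: sum_negf)
qed

lemma info_weight_sym: "info_weight m k p w s t = info_weight m k p w t s"
  unfolding info_weight_def by (intro sum.cong refl) (auto simp: mult.commute)

lemma info_weight_nonneg:
  assumes "\<And>C. C \<in> choice_sets m k \<Longrightarrow> 0 \<le> w C" and "\<And>i. i < m \<Longrightarrow> 0 \<le> p i"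
  shows "0 \<le> info_weight m k p w s t"
  unfolding info_weight_def using assms
  by (intro sum_nonneg) (auto simp: choice_sets_def subset_eq intro!: mult_nonneg_nonneg divide_nonneg_nonneg)

lemma info_weight_mixture:
  "info_weight m k p (\<lambda>C. \<alpha> * w C + \<beta> * w' C) =
    (\<lambda>s t. \<alpha> * info_weight m k p w s t + \<beta> * info_weight m k p w' s t)"
  unfolding info_weight_def by (intro ext) (simp add: sum.distrib sum_distrib_left algebra_simps)

lemma Mred_carrier: "Mred m k p w \<in> carrier_mat (m - 1) (m - 1)"
  unfolding Mred_def by simp

lemma Mred_symmetric: "0 < m \<Longrightarrow> symmetric_mat (m - 1) (Mred m k p w)"
  by (simp add: Mred_eq_reduced_laplacian reduced_laplacian_symmetric info_weight_sym)

lemma Mred_positive_semidefinite: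
  assumes "0 < m" and "\<And>C. C \<in> choice_sets m k \<Longrightarrow> 0 \<le> w C" and "\<And>i. i < m \<Longrightarrow> 0 \<le> p i"
  shows "positive_semidefinite (m - 1) (Mred m k p w)"
  unfolding Mred_eq_reduced_laplacian[OF assms(1)]
  by (intro reduced_laplacian_positive_semidefinite info_weight_sym info_weight_nonneg assms(2,3))

lemma Mred_mixture:
  "0 < m \<Longrightarrow> Mred m k p (\<lambda>C. \<alpha> * w C + \<beta> * w' C) = \<alpha> \<cdot>\<^sub>m Mred m k p w + \<beta> \<cdot>\<^sub>m Mred m k p w'"
  by (simp add: Mred_eq_reduced_laplacian info_weight_mixture reduced_laplacian_linear)

lemma Sigma_inverse:
  assumes "det (Mred m k p w) \<noteq> 0"
  shows "Sigma m k p w \<in> carrier_mat (m - 1) (m - 1)" and "Mred m k p w * Sigma m k p w = 1\<^sub>m (m - 1)"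
proof -
  have "Mred m k p w \<in> Units (ring_mat TYPE(real) (m - 1) ())"
    by (rule det_non_zero_imp_unit[OF Mred_carrier assms])
  then obtain S where S: "mat_inverse (Mred m k p w) = Some S"
    using mat_inverse(1)[OF Mred_carrier, of m k p w "()"] by (cases "mat_inverse (Mred m k p w)") auto
  then show "Sigma m k p w \<in> carrier_mat (m - 1) (m - 1)" and "Mred m k p w * Sigma m k p w = 1\<^sub>m (m - 1)"
    using mat_inverse(2)[OF Mred_carrier S] unfolding Sigma_def by auto
qed

lemma Gamma_eq_zero_extend:
  assumes "u < m" and "v < m"
  shows "Gamma m k p w u v = zero_extend (m - 1) (Sigma m k p w) u u
    + zero_extend (m - 1) (Sigma m k p w) v v - 2 * zero_extend (m - 1) (Sigma m k p w) u v"
  using assms unfolding Gamma_def zero_extend_def Let_def by auto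

lemma RSLGamma_eq_sum_increasing_pairs:
  "RSLGamma m k p w C = (\<Sum>(u, v)\<in>increasing_pairs m.
    (if u \<in> C \<and> v \<in> C then p u * p v / (setsum_pi p C)\<^sup>2 else 0) * Gamma m k p w u v)"
proof -
  have "{(u, v). u < v \<and> v < m \<and> u \<in> C \<and> v \<in> C} = {x \<in> increasing_pairs m. fst x \<in> C \<and> snd x \<in> C}"
    unfolding increasing_pairs_def by auto
  then show ?thesis
    unfolding RSLGamma_def sum_divide_distrib
    by (simp add: sum.inter_filter[OF finite_increasing_pairs] split_def if_distrib if_distribR cong: if_cong)
qed

lemma trace_Sigma_Mred:
  assumes "0 < m" and "det (Mred m k p w) \<noteq> 0"
  shows "trace (Sigma m k p w * Mred m k p w') = (\<Sum>C\<in>choice_sets m k. w' C * RSLGamma m k p w C)"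
proof -
  let ?n = "m - 1" and ?\<Sigma> = "Sigma m k p w"
  have "symmetric_mat ?n ?\<Sigma>"
    using symmetric_mat_inverse[OF Mred_carrier Mred_symmetric Sigma_inverse] assms by blast
  then have "trace (?\<Sigma> * Mred m k p w') = (\<Sum>(s, t)\<in>increasing_pairs m. info_weight m k p w' s t *
      (zero_extend ?n ?\<Sigma> s s + zero_extend ?n ?\<Sigma> t t - 2 * zero_extend ?n ?\<Sigma> s t))"
    using assms Sigma_inverse(1)[OF assms(2)]
    by (simp add: Mred_eq_reduced_laplacian trace_mult_reduced_laplacian info_weight_sym)
  also have "\<dots> = (\<Sum>(s, t)\<in>increasing_pairs m. info_weight m k p w' s t * Gamma m k p w s t)"
    by (intro sum.cong refl) (auto simp: increasing_pairs_def Gamma_eq_zero_extend)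
  also have "\<dots> = (\<Sum>C\<in>choice_sets m k. w' C * RSLGamma m k p w C)"
    unfolding info_weight_def RSLGamma_eq_sum_increasing_pairs
    by (simp add: split_def sum_distrib_left sum_distrib_right mult_ac sum.swap[of _ "choice_sets m k"])
  finally show ?thesis .
qed

section \<open>Local D-optimality\<close>

lemma mixture_in_simplex:
  assumes "w \<in> simplex m k" and "w' \<in> simplex m k" and "0 \<le> t" and "t \<le> 1"
  shows "(\<lambda>C. (1 - t) * w C + t * w' C) \<in> simplex m k"
  using assms unfolding simplex_def
  by (auto simp: sum.distrib simp flip: sum_distrib_left intro!: add_nonneg_nonneg mult_nonneg_nonneg)

lemma indicator_in_simplex:
  "C \<in> choice_sets m k \<Longrightarrow> (\<lambda>C'. if C' = C then 1 else 0) \<in> simplex m k"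
  unfolding simplex_def using finite_choice_sets by (simp add: sum.delta)

lemma exists_choice_set_containing:
  assumes "s < m" and "t < m" and "s \<noteq> t" and "2 \<le> k" and "k \<le> m"
  shows "\<exists>C\<in>choice_sets m k. s \<in> C \<and> t \<in> C"
proof -
  have "k - 2 \<le> card ({..<m} - {s, t})" using assms by (simp add: card_Diff_subset)
  then obtain D where D: "D \<subseteq> {..<m} - {s, t}" "card D = k - 2" "finite D"
    by (rule obtain_subset_with_card_n)
  then have "s \<notin> D" "t \<notin> D" by auto
  with D(2,3) assms(3,4) have "card (insert s (insert t D)) = k" by simp
  with D assms show ?thesis unfolding choice_sets_def by (intro bexI[of _ "insert s (insert t D)"]) auto
qed

locale choice_model =
  fixes m k :: nat and p :: "nat \<Rightarrow> real"
  assumes two_le_k: "2 \<le> k" and k_le_m: "k \<le> m" and p_pos: "\<And>i. i < m \<Longrightarrow> 0 < p i"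
begin

lemma m_pos: "0 < m"
  using two_le_k k_le_m by simp

lemma Mred_positive_semidefinite_simplex:
  "w \<in> simplex m k \<Longrightarrow> positive_semidefinite (m - 1) (Mred m k p w)"
  using p_pos unfolding simplex_def by (intro Mred_positive_semidefinite m_pos) (auto intro: less_imp_le)

lemma det_Mred_nonneg: "w \<in> simplex m k \<Longrightarrow> 0 \<le> det (Mred m k p w)"
  by (rule positive_semidefinite_det_nonneg[OF Mred_carrier Mred_symmetric[OF m_pos]
        Mred_positive_semidefinite_simplex])

lemma Mred_positive_definite:
  "w \<in> simplex m k \<Longrightarrow> det (Mred m k p w) \<noteq> 0 \<Longrightarrow> positive_definite (m - 1) (Mred m k p w)"
  by (rule positive_semidefinite_det_nonzero_imp_definite[OF Mred_carrier Mred_symmetric[OF m_pos]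
        Mred_positive_semidefinite_simplex])

lemma info_weight_pos:
  assumes w: "\<And>C. C \<in> choice_sets m k \<Longrightarrow> 0 < w C" and "s < m" and "t < m" and "s \<noteq> t"
  shows "0 < info_weight m k p w s t"
proof -
  have p_nonneg: "\<And>i. i < m \<Longrightarrow> 0 \<le> p i" using p_pos less_imp_le by blast
  obtain C where C: "C \<in> choice_sets m k" "s \<in> C" "t \<in> C"
    using exists_choice_set_containing assms(2-4) two_le_k k_le_m by blast
  hence "0 < setsum_pi p C"
    unfolding setsum_pi_def choice_sets_def using p_pos by (intro sum_pos) (auto intro: finite_subset)
  hence "0 < w C * (if s \<in> C \<and> t \<in> C then p s * p t / (setsum_pi p C)\<^sup>2 else 0)"
    using w[OF C(1)] C(2,3) p_pos[OF assms(2)] p_pos[OF assms(3)] by simp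
  also have "\<dots> \<le> info_weight m k p w s t"
    unfolding info_weight_def
  proof (rule member_le_sum[OF C(1) _ finite_choice_sets])
    fix C' assume C': "C' \<in> choice_sets m k - {C}"
    hence "C' \<subseteq> {..<m}" unfolding choice_sets_def by blast
    moreover have "0 \<le> w C'" using C' w less_imp_le by blast
    ultimately show "0 \<le> w C' * (if s \<in> C' \<and> t \<in> C' then p s * p t / (setsum_pi p C')\<^sup>2 else 0)"
      using p_nonneg by (auto simp: subset_eq intro!: mult_nonneg_nonneg divide_nonneg_nonneg)
  qed
  finally show ?thesis .
qed

text \<open>The uniform design gives every edge of the complete graph positive weight.\<close>
lemma exists_nonsingular_design: "\<exists>w\<in>simplex m k. 0 < det (Mred m k p w)"
proof -
  let ?w = "\<lambda>C :: nat set. 1 / real (card (choice_sets m k))"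
  obtain C0 where "C0 \<in> choice_sets m k"
    using exists_choice_set_containing[of 0 m 1 k] two_le_k k_le_m by auto
  hence card: "0 < card (choice_sets m k)" using finite_choice_sets card_gt_0_iff by blast
  hence w: "?w \<in> simplex m k" unfolding simplex_def by simp
  have nonneg: "0 \<le> info_weight m k p ?w s t" for s t
    using p_pos by (intro info_weight_nonneg) (simp_all add: less_imp_le)
  have "0 < info_weight m k p ?w s (m - 1)" if "s < m - 1" for s
    using card that by (intro info_weight_pos) auto
  hence "positive_definite (m - 1) (Mred m k p ?w)"
    unfolding Mred_eq_reduced_laplacian[OF m_pos]
    by (rule reduced_laplacian_positive_definite[OF info_weight_sym nonneg])
  with w show ?thesis
    using positive_definite_det_pos[OF Mred_carrier Mred_symmetric[OF m_pos]] by blast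
qed

text \<open>\<open>ln\<close> is monotone and some design is nonsingular, so \<open>D\<close>-optimality means maximising \<open>det\<close>.\<close>
lemma locally_D_optimal_iff_det:
  "locally_D_optimal m k p w \<longleftrightarrow>
    w \<in> simplex m k \<and> (\<forall>w'\<in>simplex m k. det (Mred m k p w') \<le> det (Mred m k p w))"
proof
  assume opt: "locally_D_optimal m k p w"
  then have w: "w \<in> simplex m k" unfolding locally_D_optimal_def by blast
  obtain w0 where w0: "w0 \<in> simplex m k" "0 < det (Mred m k p w0)"
    using exists_nonsingular_design by blast
  have "logdet m k p w0 \<le> logdet m k p w" using opt w0(1) unfolding locally_D_optimal_def by blast
  moreover have "logdet m k p w0 \<noteq> -\<infinity>" using w0(2) by (simp add: logdet_def)
  ultimately have "logdet m k p w \<noteq> -\<infinity>" by auto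
  hence pos: "0 < det (Mred m k p w)" unfolding logdet_def by (auto split: if_splits)
  have "det (Mred m k p w') \<le> det (Mred m k p w)" if w': "w' \<in> simplex m k" for w'
  proof (cases "0 < det (Mred m k p w')")
    case True
    with pos opt w' show ?thesis unfolding locally_D_optimal_def logdet_def by auto
  qed (use pos in simp)
  with w show "w \<in> simplex m k \<and> (\<forall>w'\<in>simplex m k. det (Mred m k p w') \<le> det (Mred m k p w))"
    by blast
next
  assume max: "w \<in> simplex m k \<and> (\<forall>w'\<in>simplex m k. det (Mred m k p w') \<le> det (Mred m k p w))"
  obtain w0 where "w0 \<in> simplex m k" "0 < det (Mred m k p w0)"
    using exists_nonsingular_design by blast
  with max have "0 < det (Mred m k p w)" by fastforce
  with max show "locally_D_optimal m k p w"
    unfolding locally_D_optimal_def logdet_def by auto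
qed

lemma D_optimal_imp_det_nonzero: "locally_D_optimal m k p w \<Longrightarrow> det (Mred m k p w) \<noteq> 0"
  using exists_nonsingular_design unfolding locally_D_optimal_iff_det by force

lemma trace_Sigma_Mred_indicator:
  assumes "det (Mred m k p w) \<noteq> 0" and "C \<in> choice_sets m k"
  shows "trace (Sigma m k p w * Mred m k p (\<lambda>C'. if C' = C then 1 else 0)) = RSLGamma m k p w C"
proof -
  have "(\<Sum>C'\<in>choice_sets m k. (if C' = C then 1 else 0) * RSLGamma m k p w C') =
      (\<Sum>C'\<in>choice_sets m k. if C' = C then RSLGamma m k p w C' else 0)"
    by (rule sum.cong) auto
  also have "\<dots> = RSLGamma m k p w C" using assms(2) by (simp add: sum.delta[OF finite_choice_sets])
  finally have "(\<Sum>C'\<in>choice_sets m k. (if C' = C then 1 else 0) * RSLGamma m k p w C') =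
      RSLGamma m k p w C" .
  then show ?thesis by (simp add: trace_Sigma_Mred[OF m_pos assms(1)])
qed

text \<open>Condition (iii) holds for every nonsingular design: it says \<open>tr (\<Sigma>(\<xi>) M\<^sup>(\<^sup>m\<^sup>)(\<xi>)) = m - 1\<close>.\<close>
lemma sum_RSLGamma_excess_eq_0:
  assumes w: "w \<in> simplex m k" and det: "det (Mred m k p w) \<noteq> 0"
  shows "(\<Sum>C\<in>choice_sets m k. (RSLGamma m k p w C - (real m - 1)) * w C) = 0"
proof -
  have "trace (Sigma m k p w * Mred m k p w) = trace (Mred m k p w * Sigma m k p w)"
    by (rule trace_mult_comm[OF Sigma_inverse(1)[OF det] Mred_carrier])
  also have "\<dots> = real m - 1" using Sigma_inverse(2)[OF det] m_pos by (simp add: trace_def of_nat_diff)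
  finally have "(\<Sum>C\<in>choice_sets m k. w C * RSLGamma m k p w C) = real m - 1"
    unfolding trace_Sigma_Mred[OF m_pos det] .
  moreover have "(\<Sum>C\<in>choice_sets m k. w C) = 1" using w unfolding simplex_def by blast
  ultimately show ?thesis by (simp add: algebra_simps sum_subtractf flip: sum_distrib_left)
qed

lemma D_optimal_imp_RSLGamma_le:
  assumes opt: "locally_D_optimal m k p w" and C: "C \<in> choice_sets m k"
  shows "RSLGamma m k p w C \<le> real m - 1"
proof -
  let ?n = "m - 1" and ?\<delta> = "\<lambda>C'. if C' = C then 1 else 0"
  let ?A = "Mred m k p w" and ?B = "Mred m k p ?\<delta>"
  from opt have w: "w \<in> simplex m k" and max: "\<And>w'. w' \<in> simplex m k \<Longrightarrow> det (Mred m k p w') \<le> det ?A"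
    unfolding locally_D_optimal_iff_det by auto
  have det: "det ?A \<noteq> 0" by (rule D_optimal_imp_det_nonzero[OF opt])
  have \<delta>: "?\<delta> \<in> simplex m k" by (rule indicator_in_simplex[OF C])
  have "det ((1 - t) \<cdot>\<^sub>m ?A + t \<cdot>\<^sub>m ?B) \<le> det ?A" if "0 < t" "t < 1" for t
    using max[OF mixture_in_simplex[OF w \<delta>, of t]] that by (simp add: Mred_mixture[OF m_pos])
  hence "trace (Sigma m k p w * ?B) \<le> real ?n"
    by (rule trace_le_dim_if_det_segment_le[OF Mred_carrier Mred_carrier Sigma_inverse(1)[OF det]
          Mred_symmetric[OF m_pos] Mred_symmetric[OF m_pos] Mred_positive_definite[OF w det]
          Mred_positive_semidefinite_simplex[OF \<delta>] Sigma_inverse(2)[OF det]])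
  then show ?thesis using trace_Sigma_Mred_indicator[OF det C] m_pos by (simp add: of_nat_diff)
qed

lemma D_optimal_if_RSLGamma_le:
  assumes w: "w \<in> simplex m k" and det: "det (Mred m k p w) \<noteq> 0"
    and le: "\<And>C. C \<in> choice_sets m k \<Longrightarrow> RSLGamma m k p w C \<le> real m - 1"
  shows "locally_D_optimal m k p w"
  unfolding locally_D_optimal_iff_det
proof (intro conjI ballI w)
  fix w'
  assume w': "w' \<in> simplex m k"
  let ?A = "Mred m k p w" and ?B = "Mred m k p w'"
  show "det ?B \<le> det ?A"
  proof (cases "0 < det ?B")
    case True
    have "ln (det ?B) - ln (det ?A) \<le> trace (Sigma m k p w * ?B) - real (m - 1)"
      by (rule ln_det_le_trace[OF Mred_carrier Mred_carrier Sigma_inverse(1)[OF det]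
            Mred_symmetric[OF m_pos] Mred_symmetric[OF m_pos] Mred_positive_definite[OF w det]
            Mred_positive_semidefinite_simplex[OF w'] Sigma_inverse(2)[OF det] True])
    also have "\<dots> = (\<Sum>C\<in>choice_sets m k. w' C * RSLGamma m k p w C) - (real m - 1)"
      using m_pos by (simp add: trace_Sigma_Mred[OF m_pos det] of_nat_diff)
    also have "\<dots> \<le> (\<Sum>C\<in>choice_sets m k. w' C * (real m - 1)) - (real m - 1)"
      using w' le unfolding simplex_def by (auto intro!: sum_mono mult_left_mono)
    also have "\<dots> = 0" using w' unfolding simplex_def by (simp flip: sum_distrib_right)
    finally have "ln (det ?B) \<le> ln (det ?A)" by simp
    then show ?thesis using True det det_Mred_nonneg[OF w] by simp
  qed (use det_Mred_nonneg[OF w] in simp)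
qed

end

theorem theorem3p4:
  fixes m k :: nat and p :: "nat \<Rightarrow> real" and w :: "nat set \<Rightarrow> real"
  assumes "m \<ge> 2" and "2 \<le> k" and "k \<le> m"
    and "\<And>i. i < m \<Longrightarrow> p i > 0"
  shows "locally_D_optimal m k p w \<longleftrightarrow>
    (w \<in> simplex m k \<and> det (Mred m k p w) \<noteq> 0 \<and>
     (\<forall>C\<in>choice_sets m k. RSLGamma m k p w C \<le> real m - 1) \<and>
     (\<Sum>C\<in>choice_sets m k. (RSLGamma m k p w C - (real m - 1)) * w C) = 0)"
proof -
  interpret choice_model m k p
    using assms by unfold_locales auto
  show ?thesis
  proof
    assume opt: "locally_D_optimal m k p w"
    have w: "w \<in> simplex m k" using opt unfolding locally_D_optimal_def by blast
    have det: "det (Mred m k p w) \<noteq> 0" by (rule D_optimal_imp_det_nonzero[OF opt])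
    show "w \<in> simplex m k \<and> det (Mred m k p w) \<noteq> 0 \<and>
        (\<forall>C\<in>choice_sets m k. RSLGamma m k p w C \<le> real m - 1) \<and>
        (\<Sum>C\<in>choice_sets m k. (RSLGamma m k p w C - (real m - 1)) * w C) = 0"
      using w det D_optimal_imp_RSLGamma_le[OF opt] sum_RSLGamma_excess_eq_0[OF w det] by blast
  qed (use D_optimal_if_RSLGamma_le in blast)
qed

end
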